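(* Let $(X,E,\ell)$ be a strongly connected edge-labelled directed graph with label alphabet $\Sigma$, equipped with transition probabilities $p(e)\ge\alpha>0$ for all $e\in E$ (for a constant $\alpha$) satisfying $\sum_{e:\,e^-=x}p(e)\le1$ for every $x\in X$. Let $F\subset\Sigma^+$ be a finite, non-empty set which is relatively dense in $(X,E,\ell)$. Then there exist $k\in\mathbb N$ and $\varepsilon_0>0$ such that $$\sum_{y\in X}p_F^{(k)}(x,y)\le1-\varepsilon_0\quad\text{for all }x\in X.$$
   Context: $\Sigma$ is a finite alphabet, $\Sigma^+$ the set of non-empty finite words. $(X,E,\ell)$ is a directed graph whose edges $e=(x,a,y)$ have initial vertex $e^-=x$, terminal vertex $e^+=y$ and label $\ell(e)=a\in\Sigma$ (two edges with the same endpoints have distinct labels). A path $\pi=e_1\cdots e_n$ has $e_i^+=e_{i+1}^-$, length $n$ and label $\ell(\pi)=\ell(e_1)\cdots\ell(e_n)$. Strongly connected: for any $x,y$ there is a path from $x$ to $y$. $d^+(x,y)$ is the minimal length of a path from $x$ to $y$. $F$ is relatively dense if there is $D$ such that for each $x$ there are $y$ and $w\in F$ with $d^+(x,y)\le D$ and a path starting at $y$ with label $w$. For a path $\pi=e_1\cdots e_n$ let $\mathbb P(\pi)=\prod_i p(e_i)$. Then $p_F^{(n)}(x,y)=\sum\mathbb P(\pi)$, the sum over all paths $\pi$ of length $n$ from $x$ to $y$ whose label contains no element of $F$ as a factor (contiguous subword); this is the probability that the Markov chain (with possible killing) on $X$ moving along edges with probabilities $p(e)$ goes from $x$ to $y$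 in $n$ steps without traversing in consecutive steps a path with label in $F$. *)

theory Defs
  imports "HOL-Analysis.Analysis" "HOL-Library.Sublist"
begin

type_synonym ('v,'a) edge = "'v \<times> 'a \<times> 'v"

definition edge_init :: "('v,'a) edge \<Rightarrow> 'v" where "edge_init e = fst e"
definition edge_lab  :: "('v,'a) edge \<Rightarrow> 'a" where "edge_lab e = fst (snd e)"
definition edge_term :: "('v,'a) edge \<Rightarrow> 'v" where "edge_term e = snd (snd e)"

fun epath :: "('v,'a) edge set \<Rightarrow> 'v \<Rightarrow> ('v,'a) edge list \<Rightarrow> 'v \<Rightarrow> bool" where
  "epath E x [] y = (x = y)"
| "epath E x (e # es) y = (e \<in> E \<and> edge_init e = x \<and> epath E (edge_term e) es y)"

definition path_label :: "('v,'a) edge list \<Rightarrow> 'a list" where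
  "path_label es = map edge_lab es"

definition path_prob :: "(('v,'a) edge \<Rightarrow> real) \<Rightarrow> ('v,'a) edge list \<Rightarrow> real" where
  "path_prob p es = (\<Prod>e\<leftarrow>es. p e)"

definition strongly_connected :: "'v set \<Rightarrow> ('v,'a) edge set \<Rightarrow> bool" where
  "strongly_connected X E \<longleftrightarrow> (\<forall>x\<in>X. \<forall>y\<in>X. \<exists>es. epath E x es y)"

definition dplus :: "('v,'a) edge set \<Rightarrow> 'v \<Rightarrow> 'v \<Rightarrow> nat" where
  "dplus E x y = (LEAST n. \<exists>es. epath E x es y \<and> length es = n)"

definition relatively_dense :: "'a list set \<Rightarrow> 'v set \<Rightarrow> ('v,'a) edge set \<Rightarrow> bool" where
  "relatively_dense F X E \<longleftrightarrow> (\<exists>D::nat. \<forall>x\<in>X. \<exists>y\<in>X. \<exists>w\<in>F.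
      dplus E x y \<le> D \<and> (\<exists>es z. epath E y es z \<and> path_label es = w))"

definition avoiding_paths :: "('v,'a) edge set \<Rightarrow> 'a list set \<Rightarrow> nat \<Rightarrow> 'v \<Rightarrow> 'v \<Rightarrow> ('v,'a) edge list set" where
  "avoiding_paths E F n x y = {es. epath E x es y \<and> length es = n \<and>
      (\<forall>w\<in>F. \<not> sublist w (path_label es))}"

definition pF :: "('v,'a) edge set \<Rightarrow> (('v,'a) edge \<Rightarrow> real) \<Rightarrow> 'a list set \<Rightarrow> nat \<Rightarrow> 'v \<Rightarrow> 'v \<Rightarrow> real" where
  "pF E p F n x y = (\<Sum>\<^sub>\<infinity>es\<in>avoiding_paths E F n x y. path_prob p es)"

end

theory Submission
  imports Defs
begin

text \<open>Substochasticity makes the total mass of the length-n paths from x non-increasing in n,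
  hence at most 1; the same holds for the F-avoiding paths, which are closed under taking
  prefixes. By relative density and strong connectivity, every x has a path of length at most
  k = D + max |w| whose label contains some w \<in> F; it has probability at least
  (min \<alpha> 1)^k and is missing from the avoiding paths, so their mass after k steps
  is at most 1 - (min \<alpha> 1)^k.\<close>

definition out_edges :: "('v,'a) edge set \<Rightarrow> 'v \<Rightarrow> ('v,'a) edge set" where
  "out_edges E x = {e\<in>E. edge_init e = x}"

fun path_end :: "'v \<Rightarrow> ('v,'a) edge list \<Rightarrow> 'v" where
  "path_end x [] = x"
| "path_end x (e # es) = path_end (edge_term e) es"

definition avoiding_paths_from :: "('v,'a) edge set \<Rightarrow> 'a list set \<Rightarrow> nat \<Rightarrow> 'v \<Rightarrow> ('v,'a) edge list set" where
  "avoiding_paths_from E F n x = {es. length es = n \<and> (\<exists>y. epath E x es y) \<and>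
      (\<forall>w\<in>F. \<not> sublist w (path_label es))}"

abbreviation paths_from :: "('v,'a) edge set \<Rightarrow> nat \<Rightarrow> 'v \<Rightarrow> ('v,'a) edge list set" where
  "paths_from E \<equiv> avoiding_paths_from E {}"

definition extend_paths :: "('v,'a) edge set \<Rightarrow> 'v \<Rightarrow> ('v,'a) edge list set \<Rightarrow> ('v,'a) edge list set" where
  "extend_paths E x S = (\<lambda>(es, e). es @ [e]) ` (SIGMA es:S. out_edges E (path_end x es))"

lemma epath_append_iff: "epath E x (xs @ ys) z \<longleftrightarrow> (\<exists>y. epath E x xs y \<and> epath E y ys z)"
  by (induction xs arbitrary: x) auto

lemma epath_path_end: "epath E x es y \<Longrightarrow> path_end x es = y"
  by (induction es arbitrary: x) auto

lemma epath_edges_subset: "epath E x es y \<Longrightarrow> set es \<subseteq> E"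
  by (induction es arbitrary: x) auto

lemma shortest_epath_exists:
  assumes "epath E x es y"
  obtains es' where "epath E x es' y" "length es' = dplus E x y"
  using LeastI_ex[of "\<lambda>n. \<exists>es. epath E x es y \<and> length es = n"] assms
  unfolding dplus_def by blast

lemma path_prob_snoc: "path_prob p (es @ [e]) = path_prob p es * p e"
  by (simp add: path_prob_def)

lemma path_prob_ge_power:
  assumes "0 \<le> a" and "\<forall>e\<in>set es. a \<le> p e"
  shows "a ^ length es \<le> path_prob p es"
  using assms unfolding path_prob_def by (induction es) (auto intro: mult_mono order_trans)

lemma paths_from_0: "paths_from E 0 x = {[]}"
  by (auto simp: avoiding_paths_from_def)

lemma avoiding_paths_from_Suc_subset:
  "avoiding_paths_from E F (Suc n) x \<subseteq> extend_paths E x (avoiding_paths_from E F n x)"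
proof
  fix es assume es: "es \<in> avoiding_paths_from E F (Suc n) x"
  then obtain y where "length es = Suc n" and path: "epath E x es y"
    by (auto simp: avoiding_paths_from_def)
  then obtain \<pi> e where es_eq: "es = \<pi> @ [e]" by (metis length_Suc_conv_rev)
  with path obtain z where "epath E x \<pi> z" "epath E z [e] y"
    by (metis epath_append_iff)
  moreover have "\<forall>w\<in>F. \<not> sublist w (path_label \<pi>)"
    using es es_eq
    by (auto simp: avoiding_paths_from_def path_label_def
        intro: sublist_order.order_trans[OF _ sublist_append_rightI])
  ultimately have "(\<pi>, e) \<in> (SIGMA \<pi>:avoiding_paths_from E F n x. out_edges E (path_end x \<pi>))"
    using \<open>length es = Suc n\<close> es_eq
    by (auto simp: avoiding_paths_from_def out_edges_def dest: epath_path_end)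
  then show "es \<in> extend_paths E x (avoiding_paths_from E F n x)"
    unfolding extend_paths_def es_eq by force
qed

locale substochastic_graph =
  fixes X :: "'v set" and E :: "('v,'a) edge set"
    and p :: "('v,'a) edge \<Rightarrow> real" and \<alpha> :: real
  assumes edge_ends_in: "\<And>e. e \<in> E \<Longrightarrow> edge_init e \<in> X \<and> edge_term e \<in> X"
    and alpha_pos: "\<alpha> > 0"
    and prob_ge_alpha: "\<And>e. e \<in> E \<Longrightarrow> \<alpha> \<le> p e"
    and out_prob: "\<And>x. x \<in> X \<Longrightarrow> p summable_on out_edges E x \<and> infsum p (out_edges E x) \<le> 1"
begin

lemma prob_nonneg: "e \<in> E \<Longrightarrow> 0 \<le> p e"
  using prob_ge_alpha[of e] alpha_pos by linarith

text \<open>The lower bound \<open>\<alpha>\<close> forces finite out-degree: more than \<open>1/\<alpha>\<close> out-edges would carry mass above 1.\<close>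
lemma finite_out_edges:
  assumes "x \<in> X"
  shows "finite (out_edges E x)"
proof (rule ccontr)
  assume "infinite (out_edges E x)"
  obtain N :: nat where N: "1 < real N * \<alpha>"
    using reals_Archimedean3[OF alpha_pos] by blast
  obtain B where B: "finite B" "card B = N" "B \<subseteq> out_edges E x"
    using infinite_arbitrarily_large[OF \<open>infinite (out_edges E x)\<close>] by blast
  have "real N * \<alpha> = (\<Sum>e\<in>B. \<alpha>)" using B by simp
  also have "\<dots> \<le> sum p B"
    using B prob_ge_alpha by (intro sum_mono) (auto simp: out_edges_def)
  also have "\<dots> \<le> infsum p (out_edges E x)"
    using out_prob assms B prob_nonneg by (intro finite_sum_le_infsum) (auto simp: out_edges_def)
  also have "\<dots> \<le> 1" using out_prob assms by blast
  finally show False using N by simp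
qed

lemma sum_out_edges_le_1: "x \<in> X \<Longrightarrow> sum p (out_edges E x) \<le> 1"
  using out_prob finite_out_edges by force

lemma epath_end_in: "x \<in> X \<Longrightarrow> epath E x es y \<Longrightarrow> y \<in> X"
  by (induction es arbitrary: x) (auto dest: edge_ends_in)

lemma path_prob_nonneg: "epath E x es y \<Longrightarrow> 0 \<le> path_prob p es"
  unfolding path_prob_def
  by (intro prod_list_nonneg) (auto dest!: epath_edges_subset intro: prob_nonneg)

lemma path_end_in_if_avoiding:
  "x \<in> X \<Longrightarrow> es \<in> avoiding_paths_from E F n x \<Longrightarrow> path_end x es \<in> X"
  by (auto simp: avoiding_paths_from_def dest: epath_path_end intro: epath_end_in)

lemma path_prob_nonneg_if_avoiding:
  "es \<in> avoiding_paths_from E F n x \<Longrightarrow> 0 \<le> path_prob p es"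
  by (auto simp: avoiding_paths_from_def intro: path_prob_nonneg)

lemma path_prob_nonneg_on_extend_paths:
  assumes "S \<subseteq> avoiding_paths_from E F n x" and "es \<in> extend_paths E x S"
  shows "0 \<le> path_prob p es"
proof -
  obtain \<pi> e where "es = \<pi> @ [e]" "\<pi> \<in> S" "e \<in> E"
    using assms(2) by (auto simp: extend_paths_def out_edges_def)
  moreover have "0 \<le> path_prob p \<pi>"
    using assms(1) \<open>\<pi> \<in> S\<close> path_prob_nonneg_if_avoiding by blast
  ultimately show ?thesis
    by (simp add: path_prob_snoc prob_nonneg)
qed

lemma finite_sum_extend_paths_le:
  assumes x: "x \<in> X" and S: "finite S" "S \<subseteq> avoiding_paths_from E F n x"
  shows "finite (extend_paths E x S) \<and> sum (path_prob p) (extend_paths E x S) \<le> sum (path_prob p) S"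
proof -
  let ?snoc = "\<lambda>(es, e). es @ [e]"
  let ?Sg = "SIGMA es:S. out_edges E (path_end x es)"
  have ends: "\<forall>es\<in>S. path_end x es \<in> X"
    using S path_end_in_if_avoiding[OF x] by blast
  then have fin_out: "\<forall>es\<in>S. finite (out_edges E (path_end x es))"
    by (blast intro: finite_out_edges)
  have nonneg: "\<forall>i\<in>?Sg. 0 \<le> path_prob p (?snoc i)"
    using path_prob_nonneg_on_extend_paths[OF S(2)] unfolding extend_paths_def by blast
  have "sum (path_prob p) (extend_paths E x S) \<le> sum (path_prob p \<circ> ?snoc) ?Sg"
    unfolding extend_paths_def using S fin_out nonneg by (intro sum_image_le) auto
  also have "\<dots> = (\<Sum>es\<in>S. \<Sum>e\<in>out_edges E (path_end x es). path_prob p es * p e)"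
    using sum.Sigma[OF S(1) fin_out, of "\<lambda>es e. path_prob p es * p e"]
    by (simp add: path_prob_snoc case_prod_unfold)
  also have "\<dots> = (\<Sum>es\<in>S. path_prob p es * sum p (out_edges E (path_end x es)))"
    by (simp add: sum_distrib_left)
  also have "\<dots> \<le> sum (path_prob p) S"
    using ends S sum_out_edges_le_1 path_prob_nonneg_if_avoiding
    by (intro sum_mono mult_left_le) auto
  finally show ?thesis
    using S fin_out unfolding extend_paths_def by auto
qed

lemma finite_sum_avoiding_paths_from_Suc:
  assumes "x \<in> X" "finite (avoiding_paths_from E F n x)"
  shows "finite (avoiding_paths_from E F (Suc n) x) \<and>
    sum (path_prob p) (avoiding_paths_from E F (Suc n) x) \<le> sum (path_prob p) (avoiding_paths_from E F n x)"
proof -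
  let ?A = "avoiding_paths_from E F n x"
  have ext: "finite (extend_paths E x ?A)" "sum (path_prob p) (extend_paths E x ?A) \<le> sum (path_prob p) ?A"
    using finite_sum_extend_paths_le[OF assms] by auto
  have sub: "avoiding_paths_from E F (Suc n) x \<subseteq> extend_paths E x ?A"
    by (rule avoiding_paths_from_Suc_subset)
  have "sum (path_prob p) (avoiding_paths_from E F (Suc n) x) \<le> sum (path_prob p) (extend_paths E x ?A)"
    using ext(1) sub path_prob_nonneg_on_extend_paths[OF order_refl] by (intro sum_mono2) auto
  with ext sub show ?thesis
    using finite_subset by fastforce
qed

lemma finite_avoiding_paths_from: "x \<in> X \<Longrightarrow> finite (avoiding_paths_from E F n x)"
proof (induction n)
  case 0
  have "avoiding_paths_from E F 0 x \<subseteq> {[]}" by (auto simp: avoiding_paths_from_def)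
  then show ?case by (rule finite_subset) simp
qed (use finite_sum_avoiding_paths_from_Suc in blast)

lemma sum_avoiding_paths_from_antimono:
  assumes "x \<in> X" "m \<le> n"
  shows "sum (path_prob p) (avoiding_paths_from E F n x) \<le> sum (path_prob p) (avoiding_paths_from E F m x)"
  using assms(2)
proof (induction n rule: dec_induct)
  case (step n)
  then show ?case
    using finite_sum_avoiding_paths_from_Suc[OF assms(1) finite_avoiding_paths_from[OF assms(1)]]
    by (meson order_trans)
qed simp

lemma sum_paths_from_le_1:
  assumes "x \<in> X"
  shows "sum (path_prob p) (paths_from E n x) \<le> 1"
  using sum_avoiding_paths_from_antimono[OF assms, of 0 n "{}"]
  by (simp add: paths_from_0 path_prob_def)

lemma sum_avoiding_paths_from_le_1_minus:
  assumes x: "x \<in> X" and path: "epath E x \<pi> z" and "w \<in> F" "sublist w (path_label \<pi>)"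
  shows "sum (path_prob p) (avoiding_paths_from E F (length \<pi>) x) \<le> 1 - path_prob p \<pi>"
proof -
  let ?P = "paths_from E (length \<pi>) x"
  have fin: "finite ?P" using finite_avoiding_paths_from[OF x] .
  have \<pi>: "\<pi> \<in> ?P" using path by (auto simp: avoiding_paths_from_def)
  have "avoiding_paths_from E F (length \<pi>) x \<subseteq> ?P - {\<pi>}"
    using assms by (auto simp: avoiding_paths_from_def)
  then have "sum (path_prob p) (avoiding_paths_from E F (length \<pi>) x) \<le> sum (path_prob p) (?P - {\<pi>})"
    using fin path_prob_nonneg_if_avoiding by (intro sum_mono2) auto
  also have "\<dots> = sum (path_prob p) ?P - path_prob p \<pi>"
    using sum.remove[OF fin \<pi>, of "path_prob p"] by simp
  also have "\<dots> \<le> 1 - path_prob p \<pi>"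
    using sum_paths_from_le_1[OF x] by simp
  finally show ?thesis .
qed

lemma infsum_pF_eq_sum_avoiding_paths_from:
  assumes x: "x \<in> X"
  shows "(\<Sum>\<^sub>\<infinity>y\<in>X. pF E p F k x y) = sum (path_prob p) (avoiding_paths_from E F k x)"
proof -
  let ?A = "avoiding_paths_from E F k x"
  have fin: "finite ?A" using finite_avoiding_paths_from[OF x] .
  have "avoiding_paths E F k x y = {es\<in>?A. path_end x es = y}" for y
    by (auto simp: avoiding_paths_def avoiding_paths_from_def dest: epath_path_end)
  with fin have pF_eq: "pF E p F k x y = sum (path_prob p) {es\<in>?A. path_end x es = y}" for y
    by (simp add: pF_def)
  have ends: "path_end x ` ?A \<subseteq> X"
    using path_end_in_if_avoiding[OF x] by blast
  have "(\<Sum>\<^sub>\<infinity>y\<in>X. pF E p F k x y) = (\<Sum>\<^sub>\<infinity>y\<in>path_end x ` ?A. pF E p F k x y)"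
    using ends by (intro infsum_cong_neutral) (auto simp: pF_eq intro!: sum.neutral)
  also have "\<dots> = (\<Sum>y\<in>path_end x ` ?A. sum (path_prob p) {es\<in>?A. path_end x es = y})"
    using fin by (simp add: pF_eq)
  also have "\<dots> = sum (path_prob p) ?A"
    using fin by (intro sum.group) auto
  finally show ?thesis .
qed

end

theorem mainTheorem15:
  fixes X :: "'v set" and E :: "('v,'a) edge set" and \<Sigma> :: "'a set"
    and p :: "('v,'a) edge \<Rightarrow> real" and \<alpha> :: real and F :: "'a list set"
  assumes "finite \<Sigma>"
    and "E \<subseteq> X \<times> \<Sigma> \<times> X"
    and "strongly_connected X E"
    and "\<alpha> > 0"
    and "\<forall>e\<in>E. p e \<ge> \<alpha>"
    and "\<forall>x\<in>X. p summable_on {e\<in>E. edge_init e = x} \<and>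
                 (\<Sum>\<^sub>\<infinity>e\<in>{e\<in>E. edge_init e = x}. p e) \<le> 1"
    and "finite F" and "F \<noteq> {}"
    and "\<forall>w\<in>F. w \<noteq> [] \<and> set w \<subseteq> \<Sigma>"
    and "relatively_dense F X E"
  shows "\<exists>k::nat. \<exists>\<epsilon>0::real. \<epsilon>0 > 0 \<and>
           (\<forall>x\<in>X. (\<Sum>\<^sub>\<infinity>y\<in>X. pF E p F k x y) \<le> 1 - \<epsilon>0)"
proof -
  interpret substochastic_graph X E p \<alpha>
    using assms(2,4,5,6) by unfold_locales (auto simp: edge_init_def edge_term_def out_edges_def)
  obtain D where D: "\<forall>x\<in>X. \<exists>y\<in>X. \<exists>w\<in>F. dplus E x y \<le> D \<and> (\<exists>es z. epath E y es z \<and> path_label es = w)"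
    using assms(10) unfolding relatively_dense_def by blast
  define k where "k = D + Max (length ` F)"
  define a where "a = min \<alpha> 1"
  have a: "0 < a" "a \<le> 1" "\<forall>e\<in>E. a \<le> p e"
    using assms(4,5) by (auto simp: a_def)
  have "(\<Sum>\<^sub>\<infinity>y\<in>X. pF E p F k x y) \<le> 1 - a ^ k" if x: "x \<in> X" for x
  proof -
    obtain y w es z where "y \<in> X" "w \<in> F" "dplus E x y \<le> D" "epath E y es z" "path_label es = w"
      using D x by blast
    moreover obtain \<pi> where "epath E x \<pi> y" "length \<pi> = dplus E x y"
      using assms(3) x \<open>y \<in> X\<close> shortest_epath_exists unfolding strongly_connected_def by metis
    ultimately have path: "epath E x (\<pi> @ es) z" and forbidden: "sublist w (path_label (\<pi> @ es))"
      by (auto simp: path_label_def epath_append_iff)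
    have "length es \<le> Max (length ` F)"
      using assms(7) \<open>w \<in> F\<close> \<open>path_label es = w\<close>
      by (metis Max_ge finite_imageI image_eqI length_map path_label_def)
    then have short: "length (\<pi> @ es) \<le> k"
      using \<open>length \<pi> = dplus E x y\<close> \<open>dplus E x y \<le> D\<close> by (simp add: k_def)
    have "a ^ k \<le> a ^ length (\<pi> @ es)" using a short by (simp add: power_decreasing)
    also have "\<dots> \<le> path_prob p (\<pi> @ es)"
      using a epath_edges_subset[OF path] by (intro path_prob_ge_power) auto
    finally show ?thesis
      using sum_avoiding_paths_from_le_1_minus[OF x path \<open>w \<in> F\<close> forbidden]
        sum_avoiding_paths_from_antimono[OF x short, of F] infsum_pF_eq_sum_avoiding_paths_from[OF x, where F = F and k = k]
      by linarith
  qed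
  moreover have "a ^ k > 0" using a by simp
  ultimately show ?thesis by blast
qed

end
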